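(* Let $(X,d)$ be a u.l.f. metric space and $h\colon X\to\mathbb{R}$ a map, and let $\sigma_h$ be given by $\sigma_{h,t}(a)=e^{it\bar h}ae^{-it\bar h}$ for $t\in\mathbb{R}$ and $a\in\mathrm{C}^*_u(X)$. (1) If $h$ is bounded, then every element of $\mathrm{C}^*_u(X)$ is analytic for $\sigma_h$. (2) If $h$ is coarse, then every element of $\mathrm{C}^*_u[X]$ is analytic for $\sigma_h$.
   Context: A metric space $(X,d)$ is uniformly locally finite (u.l.f.) if for every $r>0$ the cardinalities of the balls of radius $r$ are uniformly bounded by a finite number. Let $(\delta_x)_{x\in X}$ be the canonical orthonormal basis of $\ell_2(X)$ and for $a\in\mathcal{B}(\ell_2(X))$ write $a_{x,y}=\langle a\delta_y,\delta_x\rangle$. The propagation of $a$ is $\sup\{d(x,y): a_{x,y}\neq 0\}$. $\mathrm{C}^*_u[X]$ is the $^*$-algebra of all operators on $\ell_2(X)$ of finite propagation and $\mathrm{C}^*_u(X)$ (the uniform Roe algebra) is its norm closure. A map $h\colon X\to\mathbb{R}$ is coarse if for every $r>0$ there is $s>0$ such that $d(x,y)<r$ implies $|h(x)-h(y)|<s$. $\bar h$ denotes the diagonal multiplication operator by $h$ (i.e., $\bar h\delta_x=h(x)\delta_x$), and $e^{it\bar h}$ is the diagonal unitary $\delta_x\mapsto e^{ith(x)}\delta_x$. An element $b$ is analytic for a one-parameter group of automorphisms $\sigma$ if $t\mapsto\sigma_t(b)$ extends to an entire analytic map $\mathbb{C}\to\mathrm{C}^*_u(X)$. *)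

theory Defs
  imports "HOL-Analysis.Analysis"
begin

text \<open>The metric space X is a type of class metric_space. Operators on l2(X) are
represented by their matrices a x y = <a delta_y, delta_x>.\<close>

definition ulf :: "'x::metric_space itself \<Rightarrow> bool" where
  "ulf _ \<longleftrightarrow> (\<forall>r>0. \<exists>N::nat. \<forall>x::'x. finite (cball x r) \<and> card (cball x r) \<le> N)"

definition l2 :: "('x \<Rightarrow> complex) \<Rightarrow> bool" where
  "l2 f \<longleftrightarrow> (\<lambda>x. (cmod (f x))^2) summable_on UNIV"

definition l2norm :: "('x \<Rightarrow> complex) \<Rightarrow> real" where
  "l2norm f = sqrt (infsum (\<lambda>x. (cmod (f x))^2) UNIV)"

definition mat_apply :: "('x \<Rightarrow> 'x \<Rightarrow> complex) \<Rightarrow> ('x \<Rightarrow> complex) \<Rightarrow> ('x \<Rightarrow> complex)" where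
  "mat_apply a f = (\<lambda>x. infsum (\<lambda>y. a x y * f y) UNIV)"

definition bounded_op :: "('x \<Rightarrow> 'x \<Rightarrow> complex) \<Rightarrow> bool" where
  "bounded_op a \<longleftrightarrow> (\<exists>C. \<forall>f. l2 f \<longrightarrow>
      (\<forall>x. (\<lambda>y. a x y * f y) summable_on UNIV) \<and> l2 (mat_apply a f) \<and>
      l2norm (mat_apply a f) \<le> C * l2norm f)"

definition op_norm :: "('x \<Rightarrow> 'x \<Rightarrow> complex) \<Rightarrow> real" where
  "op_norm a = Sup {l2norm (mat_apply a f) | f. l2 f \<and> l2norm f \<le> 1}"

definition finite_prop :: "('x::metric_space \<Rightarrow> 'x \<Rightarrow> complex) \<Rightarrow> bool" where
  "finite_prop a \<longleftrightarrow> (\<exists>r. \<forall>x y. a x y \<noteq> 0 \<longrightarrow> dist x y \<le> r)"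

definition roe_alg :: "('x::metric_space \<Rightarrow> 'x \<Rightarrow> complex) set" where
  "roe_alg = {a. bounded_op a \<and> finite_prop a}"

definition uroe :: "('x::metric_space \<Rightarrow> 'x \<Rightarrow> complex) set" where
  "uroe = {a. bounded_op a \<and>
      (\<forall>e>0. \<exists>b\<in>roe_alg. op_norm (\<lambda>x y. a x y - b x y) < e)}"

definition coarse_map :: "('x::metric_space \<Rightarrow> real) \<Rightarrow> bool" where
  "coarse_map h \<longleftrightarrow> (\<forall>r>0. \<exists>s>0. \<forall>x y. dist x y < r \<longrightarrow> \<bar>h x - h y\<bar> < s)"

text \<open>sigma_{h,t}(a) = e^{it h} a e^{-it h}, written out on matrix entries\<close>
definition sigma :: "('x \<Rightarrow> real) \<Rightarrow> real \<Rightarrow> ('x \<Rightarrow> 'x \<Rightarrow> complex) \<Rightarrow> ('x \<Rightarrow> 'x \<Rightarrow> complex)" where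
  "sigma h t a = (\<lambda>x y. exp (\<i> * complex_of_real (t * h x)) * a x y
                        * exp (- \<i> * complex_of_real (t * h y)))"

text \<open>b is analytic for sigma_h: t \<mapsto> sigma_{h,t}(b) extends to an entire map
  C \<rightarrow> C*_u(X), i.e. complex differentiable at every point in operator norm.\<close>
definition analytic_for :: "('x::metric_space \<Rightarrow> real) \<Rightarrow> ('x \<Rightarrow> 'x \<Rightarrow> complex) \<Rightarrow> bool" where
  "analytic_for h b \<longleftrightarrow> (\<exists>F :: complex \<Rightarrow> ('x \<Rightarrow> 'x \<Rightarrow> complex).
      (\<forall>z. F z \<in> uroe) \<and>
      (\<forall>t::real. F (complex_of_real t) = sigma h t b) \<and>
      (\<forall>z. \<exists>D\<in>uroe.
         ((\<lambda>w. op_norm (\<lambda>x y. (F (z + w) x y - F z x y) / w - D x y)) \<longlongrightarrow> 0) (at 0)))"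

end

theory Submission
  imports Defs
begin

(* Extend t \<mapsto> \<sigma>_{h,t}(a) to z \<mapsto> e^{izh} a e^{-izh}, whose (x,y) entry is
   a_{xy} e^{iz(h(x) - h(y))}, with candidate derivative i[h, e^{izh} a e^{-izh}].
   If h is bounded, e^{\<plusminus>izh} and h are bounded diagonal operators, C*_u(X) is stable under
   multiplication by them, and the difference quotient minus the derivative is a sum of three
   such products whose diagonal factors have norm O(|w|) by |e^u - 1 - u| \<le> |u|^2 e^{|u|}.
   If h is coarse and a has propagation r, then |h(x) - h(y)| \<le> s on the support of a, so all
   these operators are entrywise multiples of a by factors bounded uniformly (by O(|w|) for the
   remainder); on a u.l.f. space a matrix supported in the r-band with entries bounded by K has
   norm at most K sup_x |B(x,r)| (Schur test), which gives the estimates inside C*_u[X]. *)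

lemma
  fixes f :: "'a \<Rightarrow> 'b::{comm_monoid_add, t2_space}"
  assumes "finite S" "\<And>x. x \<notin> S \<Longrightarrow> f x = 0"
  shows summable_on_finite_support: "f summable_on UNIV"
    and infsum_finite_support: "infsum f UNIV = sum f S"
proof -
  show "f summable_on UNIV"
    using summable_on_cong_neutral[of S UNIV f f] assms by auto
  have "infsum f UNIV = infsum f S"
    by (rule infsum_cong_neutral) (use assms in auto)
  then show "infsum f UNIV = sum f S" using assms(1) by simp
qed

lemma l2_zero: "l2 (\<lambda>_. 0)"
  and l2norm_zero: "l2norm (\<lambda>_. 0) = 0"
  by (auto simp: l2_def l2norm_def)

lemma l2norm_nonneg: "l2norm f \<ge> 0"
  unfolding l2norm_def by (simp add: infsum_nonneg)

lemma l2_dominated: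
  assumes g: "l2 g" and dom: "\<And>x. cmod (k x) \<le> U * cmod (g x)" and U: "U \<ge> 0"
  shows "l2 k" "l2norm k \<le> U * l2norm g"
proof -
  have sg: "(\<lambda>x. U^2 * (cmod (g x))^2) summable_on UNIV"
    using g unfolding l2_def by (rule summable_on_cmult_right)
  have le: "(cmod (k x))^2 \<le> U^2 * (cmod (g x))^2" for x
    using power_mono[OF dom[of x]] by (simp add: power_mult_distrib)
  have sk: "(\<lambda>x. (cmod (k x))^2) summable_on UNIV"
    by (rule summable_on_comparison_test[OF sg]) (use le in auto)
  then show "l2 k" unfolding l2_def .
  have "infsum (\<lambda>x. (cmod (k x))^2) UNIV \<le> infsum (\<lambda>x. U^2 * (cmod (g x))^2) UNIV"
    by (rule infsum_mono[OF sk sg]) (use le in auto)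
  also have "\<dots> = U^2 * infsum (\<lambda>x. (cmod (g x))^2) UNIV"
    by (rule infsum_cmult_right) (use g in \<open>auto simp: l2_def\<close>)
  finally show "l2norm k \<le> U * l2norm g"
    using U unfolding l2norm_def by (metis real_sqrt_le_mono real_sqrt_mult real_sqrt_abs abs_of_nonneg)
qed

lemma norm_le_l2norm:
  assumes "l2 f"
  shows "cmod (f x) \<le> l2norm f"
proof -
  have "(cmod (f x))^2 \<le> infsum (\<lambda>x. (cmod (f x))^2) UNIV"
    using finite_sum_le_infsum[of "\<lambda>x. (cmod (f x))^2" UNIV "{x}"] assms by (simp add: l2_def)
  then show ?thesis unfolding l2norm_def using real_le_rsqrt by blast
qed

lemma l2_add:
  assumes "l2 f" "l2 g"
  shows "l2 (\<lambda>x. f x + g x)" "l2norm (\<lambda>x. f x + g x) \<le> l2norm f + l2norm g"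
proof -
  have sf: "(\<lambda>x. (cmod (f x))^2) summable_on UNIV" and sg: "(\<lambda>x. (cmod (g x))^2) summable_on UNIV"
    using assms by (auto simp: l2_def)
  have le: "(cmod (f x + g x))^2 \<le> 2 * (cmod (f x))^2 + 2 * (cmod (g x))^2" for x
  proof -
    have "(cmod (f x + g x))^2 \<le> (cmod (f x) + cmod (g x))^2"
      by (intro power_mono norm_triangle_ineq) auto
    also have "\<dots> \<le> 2 * (cmod (f x))^2 + 2 * (cmod (g x))^2"
      by (smt (verit) sum_squares_bound power2_sum)
    finally show ?thesis .
  qed
  have s: "(\<lambda>x. (cmod (f x + g x))^2) summable_on UNIV"
    by (rule summable_on_comparison_test[of "\<lambda>x. 2 * (cmod (f x))^2 + 2 * (cmod (g x))^2"])
       (use le in \<open>auto intro!: summable_on_add summable_on_cmult_right sf sg\<close>)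
  then show "l2 (\<lambda>x. f x + g x)" unfolding l2_def .
  have "infsum (\<lambda>x. (cmod (f x + g x))^2) UNIV \<le> (l2norm f + l2norm g)^2"
  proof (rule infsum_le_finite_sums[OF s])
    fix F :: "'a set" assume F: "finite F"
    have "L2_set (\<lambda>x. cmod (f x + g x)) F \<le> L2_set (\<lambda>x. cmod (f x) + cmod (g x)) F"
      by (rule L2_set_mono) (auto intro: norm_triangle_ineq)
    also have "\<dots> \<le> L2_set (\<lambda>x. cmod (f x)) F + L2_set (\<lambda>x. cmod (g x)) F"
      by (rule L2_set_triangle_ineq)
    also have "\<dots> \<le> l2norm f + l2norm g"
      unfolding L2_set_def l2norm_def
      by (intro add_mono real_sqrt_le_mono finite_sum_le_infsum F sf sg) auto
    finally show "(\<Sum>x\<in>F. (cmod (f x + g x))^2) \<le> (l2norm f + l2norm g)^2"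
      unfolding L2_set_def by (rule sqrt_le_D)
  qed
  then have "sqrt (infsum (\<lambda>x. (cmod (f x + g x))^2) UNIV) \<le> sqrt ((l2norm f + l2norm g)^2)"
    by (rule real_sqrt_le_mono)
  then show "l2norm (\<lambda>x. f x + g x) \<le> l2norm f + l2norm g"
    unfolding l2norm_def[of "\<lambda>x. f x + g x"] using l2norm_nonneg[of f] l2norm_nonneg[of g] by simp
qed

lemma mat_apply_cmult: "mat_apply a (\<lambda>y. c * f y) = (\<lambda>x. c * mat_apply a f x)"
  unfolding mat_apply_def by (simp add: mult.left_commute infsum_cmult_right')

lemma bdd_above_op_norm_set:
  assumes "bounded_op a"
  shows "bdd_above {l2norm (mat_apply a f) | f. l2 f \<and> l2norm f \<le> 1}"
proof -
  obtain C where C: "\<And>f. l2 f \<Longrightarrow> l2norm (mat_apply a f) \<le> C * l2norm f"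
    using assms unfolding bounded_op_def by blast
  have "l2norm (mat_apply a f) \<le> max C 0" if "l2 f" "l2norm f \<le> 1" for f
  proof -
    have "l2norm (mat_apply a f) \<le> max C 0 * l2norm f"
      using C[OF that(1)] mult_right_mono[OF max.cobounded1 l2norm_nonneg] by (rule order_trans)
    also have "\<dots> \<le> max C 0" using that(2) l2norm_nonneg[of f] by (simp add: mult_left_le)
    finally show ?thesis .
  qed
  then show ?thesis unfolding bdd_above_def by blast
qed

lemma l2norm_mat_apply_le_op_norm:
  assumes "bounded_op a" "l2 f" "l2norm f \<le> 1"
  shows "l2norm (mat_apply a f) \<le> op_norm a"
  unfolding op_norm_def by (rule cSup_upper) (use assms bdd_above_op_norm_set in auto)

lemma op_norm_nonneg:
  assumes "bounded_op a"
  shows "op_norm a \<ge> 0"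
proof -
  have "mat_apply a (\<lambda>_. 0) = (\<lambda>_. 0)" by (simp add: mat_apply_def)
  then show ?thesis
    using l2norm_mat_apply_le_op_norm[OF assms l2_zero] by (simp add: l2norm_zero)
qed

lemma op_norm_le:
  assumes "\<And>f. l2 f \<Longrightarrow> l2norm f \<le> 1 \<Longrightarrow> l2norm (mat_apply a f) \<le> K"
  shows "op_norm a \<le> K"
  unfolding op_norm_def
  by (rule cSup_least) (use assms in \<open>auto intro!: exI[of _ "\<lambda>_. 0"] simp: l2_zero l2norm_zero\<close>)

lemma bounded_opI:
  assumes "\<And>f. l2 f \<Longrightarrow> (\<forall>x. (\<lambda>y. a x y * f y) summable_on UNIV) \<and> l2 (mat_apply a f) \<and>
      l2norm (mat_apply a f) \<le> K * l2norm f"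
    and "K \<ge> 0"
  shows "bounded_op a" "op_norm a \<le> K"
proof -
  show "bounded_op a" unfolding bounded_op_def using assms(1) by blast
  show "op_norm a \<le> K"
  proof (rule op_norm_le)
    fix f :: "'a \<Rightarrow> complex" assume "l2 f" "l2norm f \<le> 1"
    then show "l2norm (mat_apply a f) \<le> K"
      using assms by (meson mult_left_le order_trans l2norm_nonneg)
  qed
qed

lemma bounded_opD:
  assumes "bounded_op a" "l2 f"
  shows "l2 (mat_apply a f)" "(\<lambda>y. a x y * f y) summable_on UNIV"
  using assms unfolding bounded_op_def by auto

lemma l2norm_mat_apply_le:
  assumes a: "bounded_op a" and f: "l2 f"
  shows "l2norm (mat_apply a f) \<le> op_norm a * l2norm f"
proof (cases "l2norm f = 0")
  case True
  then have "f = (\<lambda>_. 0)" using norm_le_l2norm[OF f] by fastforce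
  then show ?thesis by (simp add: mat_apply_def l2norm_zero)
next
  case False
  define L where "L = l2norm f"
  have L: "L > 0" using False l2norm_nonneg[of f] unfolding L_def by auto
  define g where "g = (\<lambda>y. complex_of_real (1/L) * f y)"
  have g_le: "cmod (g x) \<le> (1/L) * cmod (f x)" for x
    using L by (simp add: g_def norm_divide)
  have g: "l2 g" "l2norm g \<le> 1"
    using l2_dominated[OF f g_le] L unfolding L_def by auto
  have "mat_apply a f = (\<lambda>x. complex_of_real L * mat_apply a g x)"
    using L unfolding g_def mat_apply_cmult by (simp add: of_real_def)
  then have "l2norm (mat_apply a f) \<le> L * l2norm (mat_apply a g)"
    using l2_dominated(2)[OF bounded_opD(1)[OF a g(1)], of "mat_apply a f" L] L by (simp add: norm_mult)
  also have "\<dots> \<le> L * op_norm a"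
    using l2norm_mat_apply_le_op_norm[OF a g] L by simp
  finally show ?thesis unfolding L_def by (simp add: mult.commute)
qed

lemma norm_entry_le_op_norm:
  assumes a: "bounded_op a"
  shows "cmod (a x y) \<le> op_norm a"
proof -
  define e where "e = (\<lambda>z. if z = y then 1 else 0 :: complex)"
  have e_sq: "(\<lambda>z. (cmod (e z))^2) = (\<lambda>z. if z = y then 1 else 0)"
    by (auto simp: e_def)
  have "(\<lambda>z. if z = y then 1 else 0 :: real) summable_on UNIV"
    by (rule summable_on_finite_support[of "{y}"]) auto
  moreover have "infsum (\<lambda>z. if z = y then 1 else 0 :: real) UNIV = 1"
    by (subst infsum_finite_support[of "{y}"]) auto
  ultimately have e: "l2 e" "l2norm e = 1"
    unfolding l2_def l2norm_def e_sq by simp_all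
  have "mat_apply a e x = a x y"
    unfolding mat_apply_def by (subst infsum_finite_support[of "{y}"]) (auto simp: e_def)
  then have "cmod (a x y) \<le> l2norm (mat_apply a e)"
    using norm_le_l2norm[OF bounded_opD(1)[OF a e(1)], of x] by simp
  also have "\<dots> \<le> op_norm a"
    using l2norm_mat_apply_le_op_norm[OF a e(1)] e(2) by simp
  finally show ?thesis .
qed

lemma bounded_op_diag_mult:
  assumes a: "bounded_op a" and u: "\<And>x. cmod (u x) \<le> U" and v: "\<And>y. cmod (v y) \<le> V"
  shows "bounded_op (\<lambda>x y. u x * a x y * v y)"
    and "op_norm (\<lambda>x y. u x * a x y * v y) \<le> U * V * op_norm a"
proof -
  have U: "U \<ge> 0" and V: "V \<ge> 0"
    using u v by (meson norm_ge_zero order_trans)+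
  have bound: "(\<forall>x. (\<lambda>y. u x * a x y * v y * f y) summable_on UNIV) \<and>
      l2 (mat_apply (\<lambda>x y. u x * a x y * v y) f) \<and>
      l2norm (mat_apply (\<lambda>x y. u x * a x y * v y) f) \<le> U * V * op_norm a * l2norm f"
    if f: "l2 f" for f
  proof -
    define g where "g y = v y * f y" for y
    have g_le: "cmod (g y) \<le> V * cmod (f y)" for y
      unfolding g_def norm_mult by (rule mult_right_mono[OF v]) simp
    have g: "l2 g" "l2norm g \<le> V * l2norm f"
      by (rule l2_dominated[OF f g_le V])+
    have entries: "u x * a x y * v y * f y = u x * (a x y * g y)" for x y
      by (simp add: g_def algebra_simps)
    have rows: "(\<lambda>y. u x * a x y * v y * f y) summable_on UNIV" for x
      unfolding entries by (intro summable_on_cmult_right bounded_opD(2)[OF a g(1)])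
    have m: "mat_apply (\<lambda>x y. u x * a x y * v y) f = (\<lambda>x. u x * mat_apply a g x)"
      unfolding mat_apply_def entries by (simp add: infsum_cmult_right')
    have ug_le: "cmod (u x * mat_apply a g x) \<le> U * cmod (mat_apply a g x)" for x
      unfolding norm_mult by (rule mult_right_mono[OF u]) simp
    note ug = l2_dominated[OF bounded_opD(1)[OF a g(1)] ug_le U]
    have "l2norm (\<lambda>x. u x * mat_apply a g x) \<le> U * l2norm (mat_apply a g)"
      by (rule ug(2))
    also have "\<dots> \<le> U * (op_norm a * l2norm g)"
      using l2norm_mat_apply_le[OF a g(1)] U by (rule mult_left_mono)
    also have "\<dots> \<le> U * (op_norm a * (V * l2norm f))"
      using g(2) U op_norm_nonneg[OF a] by (intro mult_left_mono) auto
    finally show ?thesis using rows ug(1) m by (simp add: algebra_simps)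
  qed
  then show "bounded_op (\<lambda>x y. u x * a x y * v y)"
    and "op_norm (\<lambda>x y. u x * a x y * v y) \<le> U * V * op_norm a"
    using bounded_opI[OF bound] U V op_norm_nonneg[OF a] by simp_all
qed

lemma bounded_op_add:
  assumes a: "bounded_op a" and b: "bounded_op b"
  shows "bounded_op (\<lambda>x y. a x y + b x y)"
    and "op_norm (\<lambda>x y. a x y + b x y) \<le> op_norm a + op_norm b"
proof -
  have bound: "(\<forall>x. (\<lambda>y. (a x y + b x y) * f y) summable_on UNIV) \<and> l2 (mat_apply (\<lambda>x y. a x y + b x y) f) \<and>
      l2norm (mat_apply (\<lambda>x y. a x y + b x y) f) \<le> (op_norm a + op_norm b) * l2norm f"
    if f: "l2 f" for f
  proof -
    note ra = bounded_opD(2)[OF a f] and rb = bounded_opD(2)[OF b f]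
    have rows: "(\<lambda>y. (a x y + b x y) * f y) summable_on UNIV" for x
      using summable_on_add[OF ra rb] by (simp add: distrib_right)
    have m: "mat_apply (\<lambda>x y. a x y + b x y) f = (\<lambda>x. mat_apply a f x + mat_apply b f x)"
      unfolding mat_apply_def using infsum_add[OF ra rb] by (simp add: distrib_right)
    note la = bounded_opD(1)[OF a f] and lb = bounded_opD(1)[OF b f]
    have "l2norm (mat_apply (\<lambda>x y. a x y + b x y) f) \<le> l2norm (mat_apply a f) + l2norm (mat_apply b f)"
      unfolding m by (rule l2_add(2)[OF la lb])
    also have "\<dots> \<le> (op_norm a + op_norm b) * l2norm f"
      using l2norm_mat_apply_le[OF a f] l2norm_mat_apply_le[OF b f] by (simp add: distrib_right)
    finally show ?thesis using rows m l2_add(1)[OF la lb] by auto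
  qed
  then show "bounded_op (\<lambda>x y. a x y + b x y)"
    and "op_norm (\<lambda>x y. a x y + b x y) \<le> op_norm a + op_norm b"
    using bounded_opI[OF bound] op_norm_nonneg[OF a] op_norm_nonneg[OF b] by simp_all
qed

lemma bounded_op_diff:
  assumes "bounded_op a" "bounded_op b"
  shows "bounded_op (\<lambda>x y. a x y - b x y)"
  using bounded_op_add(1)[OF assms(1) bounded_op_diag_mult(1)[OF assms(2), of "\<lambda>_. -1" 1 "\<lambda>_. 1" 1]]
  by simp

lemma op_norm_zero: "op_norm (\<lambda>x y. 0) = 0"
proof -
  have "mat_apply (\<lambda>x y. 0) f = (\<lambda>_. 0)" for f :: "'a \<Rightarrow> complex"
    by (simp add: mat_apply_def)
  then have zero_bound: "(\<forall>x. (\<lambda>y. 0 * f y) summable_on UNIV) \<and> l2 (mat_apply (\<lambda>x y. 0) f) \<and>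
      l2norm (mat_apply (\<lambda>x y. 0) f) \<le> 0 * l2norm f" for f :: "'a \<Rightarrow> complex"
    by (simp add: l2_zero l2norm_zero)
  note zero_op = bounded_opI[OF zero_bound order_refl]
  show ?thesis using op_norm_nonneg[OF zero_op(1)] zero_op(2) by simp
qed

section \<open>Band matrices on uniformly locally finite spaces\<close>

lemma mat_apply_band:
  assumes band: "\<And>x y. a x y \<noteq> 0 \<Longrightarrow> dist x y \<le> r" and fin: "finite (cball x r)"
  shows "(\<lambda>y. a x y * f y) summable_on UNIV"
    and "mat_apply a f x = (\<Sum>y\<in>cball x r. a x y * f y)"
  unfolding mat_apply_def
  by (rule summable_on_finite_support[OF fin] infsum_finite_support[OF fin];
      use band in force)+

lemma band_mat_apply_sq_le:
  assumes band: "\<And>x y. a x y \<noteq> 0 \<Longrightarrow> dist x y \<le> r"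
    and fin: "finite (cball x r)" and card: "card (cball x r) \<le> N"
    and entries: "\<And>x y. cmod (a x y) \<le> K"
  shows "(cmod (mat_apply a f x))^2 \<le> K^2 * N * (\<Sum>y\<in>cball x r. (cmod (f y))^2)"
proof -
  have row: "mat_apply a f x = (\<Sum>y\<in>cball x r. a x y * f y)"
    by (rule mat_apply_band(2)[OF band fin])
  have "cmod (mat_apply a f x) \<le> (\<Sum>y\<in>cball x r. K * cmod (f y))"
    unfolding row by (rule order_trans[OF norm_sum sum_mono]) (simp add: norm_mult entries mult_right_mono)
  then have "(cmod (mat_apply a f x))^2 \<le> (\<Sum>y\<in>cball x r. K * cmod (f y))^2"
    by (intro power_mono) auto
  also have "\<dots> \<le> (\<Sum>y\<in>cball x r. (K * cmod (f y))^2) * card (cball x r)"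
    by (rule sum_squared_le_sum_of_squares)
  also have "\<dots> \<le> (\<Sum>y\<in>cball x r. (K * cmod (f y))^2) * N"
    using card by (intro mult_left_mono) (auto intro: sum_nonneg)
  finally show ?thesis by (simp add: power_mult_distrib sum_distrib_left mult_ac)
qed

(* Double counting: each y lies in at most N of the balls cball x r with x \<in> F. *)
lemma sum_sum_cball_le:
  fixes g :: "'x::metric_space \<Rightarrow> real"
  assumes F: "finite F" and fin: "\<And>x::'x. finite (cball x r)" and card: "\<And>x::'x. card (cball x r) \<le> N"
    and g: "g summable_on UNIV" "\<And>y. g y \<ge> 0"
  shows "(\<Sum>x\<in>F. \<Sum>y\<in>cball x r. g y) \<le> N * infsum g UNIV"
proof -
  define G where "G = (\<Union>x\<in>F. cball x r)"
  have G: "finite G" unfolding G_def using F fin by auto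
  have "(\<Sum>x\<in>F. \<Sum>y\<in>cball x r. g y) = (\<Sum>x\<in>F. \<Sum>y\<in>{y\<in>G. dist x y \<le> r}. g y)"
    by (intro sum.cong) (auto simp: G_def)
  also have "\<dots> = (\<Sum>y\<in>G. \<Sum>x\<in>{x\<in>F. dist x y \<le> r}. g y)"
    by (rule sum.swap_restrict[OF F G])
  also have "\<dots> \<le> (\<Sum>y\<in>G. N * g y)"
  proof (rule sum_mono)
    fix y
    have "{x\<in>F. dist x y \<le> r} \<subseteq> cball y r" by (auto simp: dist_commute)
    then have "card {x\<in>F. dist x y \<le> r} \<le> N"
      using card_mono[OF fin] card[of y] order_trans by blast
    then show "(\<Sum>x\<in>{x\<in>F. dist x y \<le> r}. g y) \<le> N * g y"
      using g(2)[of y] by (simp add: mult_right_mono)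
  qed
  also have "\<dots> \<le> N * infsum g UNIV"
    unfolding sum_distrib_left[symmetric] using g by (intro mult_left_mono finite_sum_le_infsum G) auto
  finally show ?thesis .
qed

lemma band_op_norm_le:
  fixes a :: "'x::metric_space \<Rightarrow> 'x \<Rightarrow> complex"
  assumes band: "\<And>x y. a x y \<noteq> 0 \<Longrightarrow> dist x y \<le> r"
    and fin: "\<And>x::'x. finite (cball x r)" and card: "\<And>x::'x. card (cball x r) \<le> N"
    and entries: "\<And>x y. cmod (a x y) \<le> K"
  shows "bounded_op a" "op_norm a \<le> K * N"
proof -
  have K: "K \<ge> 0" using entries by (meson norm_ge_zero order_trans)
  have "(\<forall>x. (\<lambda>y. a x y * f y) summable_on UNIV) \<and> l2 (mat_apply a f) \<and>
      l2norm (mat_apply a f) \<le> K * N * l2norm f" if f: "l2 f" for f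
  proof -
    define S where "S = infsum (\<lambda>y. (cmod (f y))^2) UNIV"
    have finite_sums: "(\<Sum>x\<in>F. (cmod (mat_apply a f x))^2) \<le> (K * N)^2 * S" if F: "finite F" for F
    proof -
      have "(\<Sum>x\<in>F. (cmod (mat_apply a f x))^2) \<le> (\<Sum>x\<in>F. K^2 * N * (\<Sum>y\<in>cball x r. (cmod (f y))^2))"
        using band_mat_apply_sq_le[OF band fin card entries] by (rule sum_mono)
      also have "\<dots> \<le> K^2 * N * (N * S)"
        unfolding sum_distrib_left[symmetric] S_def using f
        by (intro mult_left_mono sum_sum_cball_le F fin card) (auto simp: l2_def)
      finally show ?thesis by (simp add: power_mult_distrib power2_eq_square mult_ac)
    qed
    have sm: "(\<lambda>x. (cmod (mat_apply a f x))^2) summable_on UNIV"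
      by (rule nonneg_bdd_above_summable_on) (use finite_sums in \<open>auto simp: bdd_above_def\<close>)
    have "infsum (\<lambda>x. (cmod (mat_apply a f x))^2) UNIV \<le> (K * N)^2 * S"
      by (rule infsum_le_finite_sums[OF sm finite_sums])
    then have "l2norm (mat_apply a f) \<le> sqrt ((K * N)^2 * S)"
      unfolding l2norm_def by (rule real_sqrt_le_mono)
    also have "\<dots> = K * N * l2norm f"
      using K unfolding l2norm_def S_def by (simp add: real_sqrt_mult)
    finally show ?thesis using mat_apply_band(1)[OF band fin] sm by (simp add: l2_def)
  qed
  then show "bounded_op a" "op_norm a \<le> K * N"
    using bounded_opI[of a "K * N"] K by simp_all
qed

lemma roe_alg_diag_mult:
  assumes b: "b \<in> roe_alg" and u: "\<And>x. cmod (u x) \<le> U" and v: "\<And>y. cmod (v y) \<le> V"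
  shows "(\<lambda>x y. u x * b x y * v y) \<in> roe_alg"
  using b bounded_op_diag_mult(1)[OF _ u v] unfolding roe_alg_def finite_prop_def by fastforce

lemma roe_alg_add:
  assumes "b \<in> roe_alg" "c \<in> roe_alg"
  shows "(\<lambda>x y. b x y + c x y) \<in> roe_alg"
proof -
  obtain r s where "\<And>x y. b x y \<noteq> 0 \<Longrightarrow> dist x y \<le> r" "\<And>x y. c x y \<noteq> 0 \<Longrightarrow> dist x y \<le> s"
    using assms unfolding roe_alg_def finite_prop_def by blast
  then have "\<forall>x y. b x y + c x y \<noteq> 0 \<longrightarrow> dist x y \<le> max r s"
    by (metis add.right_neutral add_0 max.coboundedI1 max.coboundedI2)
  then show ?thesis
    using assms bounded_op_add(1) unfolding roe_alg_def finite_prop_def by blast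
qed

lemma roe_alg_subset_uroe: "roe_alg \<subseteq> uroe"
proof
  fix a :: "'a \<Rightarrow> 'a \<Rightarrow> complex" assume a: "a \<in> roe_alg"
  then show "a \<in> uroe"
    unfolding uroe_def
    by (intro CollectI conjI allI impI bexI[of _ a]) (auto simp: roe_alg_def op_norm_zero)
qed

lemma uroe_diag_mult:
  assumes a: "a \<in> uroe" and u: "\<And>x. cmod (u x) \<le> U" and v: "\<And>y. cmod (v y) \<le> V"
  shows "(\<lambda>x y. u x * a x y * v y) \<in> uroe"
proof -
  have U: "U \<ge> 0" and V: "V \<ge> 0"
    using u v by (meson norm_ge_zero order_trans)+
  have ba: "bounded_op a" using a by (simp add: uroe_def)
  have "\<exists>c\<in>roe_alg. op_norm (\<lambda>x y. u x * a x y * v y - c x y) < e" if e: "e > 0" for e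
  proof -
    have UV: "U * V \<ge> 0" using U V by simp
    then have "e / (U * V + 1) > 0" using e by simp
    then obtain b where b: "b \<in> roe_alg" and ab: "op_norm (\<lambda>x y. a x y - b x y) < e / (U * V + 1)"
      using a unfolding uroe_def by blast
    have bd: "bounded_op (\<lambda>x y. a x y - b x y)"
      using ba b bounded_op_diff by (auto simp: roe_alg_def)
    have "op_norm (\<lambda>x y. u x * (a x y - b x y) * v y) \<le> U * V * op_norm (\<lambda>x y. a x y - b x y)"
      by (rule bounded_op_diag_mult(2)[OF bd u v])
    also have "\<dots> \<le> (U * V + 1) * op_norm (\<lambda>x y. a x y - b x y)"
      using op_norm_nonneg[OF bd] by (intro mult_right_mono) auto
    also have "\<dots> < e"
      using ab UV by (simp add: less_divide_eq mult.commute)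
    finally have "op_norm (\<lambda>x y. u x * a x y * v y - u x * b x y * v y) < e"
      by (simp add: algebra_simps)
    then show ?thesis using roe_alg_diag_mult[where u=u and v=v, OF b u v] by (rule bexI)
  qed
  then show ?thesis unfolding uroe_def using bounded_op_diag_mult(1)[where u=u and v=v, OF ba u v] by blast
qed

lemma uroe_add:
  assumes a: "a \<in> uroe" and b: "b \<in> uroe"
  shows "(\<lambda>x y. a x y + b x y) \<in> uroe"
proof -
  have ba: "bounded_op a" and bb: "bounded_op b" using a b by (simp_all add: uroe_def)
  have "\<exists>c\<in>roe_alg. op_norm (\<lambda>x y. a x y + b x y - c x y) < e" if e: "e > 0" for e
  proof -
    have e2: "e/2 > 0" using e by simp
    obtain c1 where c1: "c1 \<in> roe_alg" "op_norm (\<lambda>x y. a x y - c1 x y) < e/2"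
      using a e2 unfolding uroe_def by blast
    obtain c2 where c2: "c2 \<in> roe_alg" "op_norm (\<lambda>x y. b x y - c2 x y) < e/2"
      using b e2 unfolding uroe_def by blast
    have "op_norm (\<lambda>x y. (a x y - c1 x y) + (b x y - c2 x y))
        \<le> op_norm (\<lambda>x y. a x y - c1 x y) + op_norm (\<lambda>x y. b x y - c2 x y)"
      using ba bb c1 c2 by (intro bounded_op_add(2) bounded_op_diff) (auto simp: roe_alg_def)
    also have "\<dots> < e" using c1 c2 by linarith
    finally have "op_norm (\<lambda>x y. a x y + b x y - (c1 x y + c2 x y)) < e"
      by (simp add: algebra_simps)
    then show ?thesis using roe_alg_add[OF c1(1) c2(1)] by (rule bexI)
  qed
  then show ?thesis unfolding uroe_def using bounded_op_add(1)[OF ba bb] by blast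
qed

section \<open>Exponential estimates\<close>

lemma norm_exp_minus_1_minus_le: "cmod (exp u - 1 - u) \<le> (cmod u)^2 * exp (cmod u)"
proof -
  have "(\<lambda>k. u^(k+2) /\<^sub>R fact (k+2)) sums (exp u - (\<Sum>k<2. u^k /\<^sub>R fact k))"
    by (intro sums_split_initial_segment exp_converges)
  then have tail: "(\<lambda>k. u^(k+2) /\<^sub>R fact (k+2)) sums (exp u - 1 - u)"
    by (simp add: eval_nat_numeral algebra_simps)
  have majorant: "(\<lambda>k. (cmod u)^2 * ((cmod u)^k /\<^sub>R fact k)) sums ((cmod u)^2 * exp (cmod u))"
    by (intro sums_mult exp_converges)
  have le: "norm (u^(k+2) /\<^sub>R fact (k+2)) \<le> (cmod u)^2 * ((cmod u)^k /\<^sub>R fact k)" for k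
  proof -
    have "norm (u^(k+2) /\<^sub>R fact (k+2)) = (cmod u)^(k+2) / fact (k+2)"
      by (simp only: norm_scaleR norm_power) (simp add: divide_inverse mult.commute)
    also have "\<dots> \<le> (cmod u)^(k+2) / fact k"
      by (intro divide_left_mono fact_mono) auto
    also have "\<dots> = (cmod u)^2 * ((cmod u)^k /\<^sub>R fact k)"
      by (simp add: power_add divide_inverse mult_ac power2_eq_square)
    finally show ?thesis .
  qed
  have summable: "summable (\<lambda>k. norm (u^(k+2) /\<^sub>R fact (k+2)))"
    by (rule summable_comparison_test'[OF sums_summable[OF majorant]]) (use le in auto)
  have "cmod (exp u - 1 - u) = norm (\<Sum>k. u^(k+2) /\<^sub>R fact (k+2))"
    using tail by (simp add: sums_iff)
  also have "\<dots> \<le> (\<Sum>k. norm (u^(k+2) /\<^sub>R fact (k+2)))"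
    by (rule summable_norm[OF summable])
  also have "\<dots> \<le> (\<Sum>k. (cmod u)^2 * ((cmod u)^k /\<^sub>R fact k))"
    by (rule suminf_le[OF le summable sums_summable[OF majorant]])
  also have "\<dots> = (cmod u)^2 * exp (cmod u)"
    using majorant by (simp add: sums_iff)
  finally show ?thesis .
qed

lemma norm_exp_ii_le:
  assumes "\<bar>c\<bar> \<le> M"
  shows "cmod (exp (\<i> * z * of_real c)) \<le> exp (cmod z * M)"
proof -
  have "cmod (exp (\<i> * z * of_real c)) \<le> exp (cmod z * \<bar>c\<bar>)"
    using norm_exp[of "\<i> * z * of_real c"] by (simp add: norm_mult)
  also have "\<dots> \<le> exp (cmod z * M)"
    using assms by (simp add: mult_left_mono)
  finally show ?thesis .
qed

lemma norm_exp_ii_quotient_le: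
  assumes w: "cmod w \<le> 1" and c: "\<bar>c\<bar> \<le> M"
  shows "cmod ((exp (\<i> * w * of_real c) - 1 - \<i> * w * of_real c) / w) \<le> cmod w * (M^2 * exp M)"
proof (cases "w = 0")
  case False
  define p where "p = \<i> * w * of_real c"
  have np: "cmod p = cmod w * \<bar>c\<bar>" unfolding p_def by (simp add: norm_mult)
  have p_le: "cmod p \<le> M"
    unfolding np using w c by (metis abs_ge_zero mult_le_one mult_mono norm_ge_zero order_trans mult_1)
  have p_sq_le: "(cmod p)^2 \<le> (cmod w)^2 * M^2"
    unfolding np power_mult_distrib using c by (intro mult_left_mono power_mono) auto
  have "cmod (exp p - 1 - p) \<le> (cmod p)^2 * exp (cmod p)"
    by (rule norm_exp_minus_1_minus_le)
  also have "\<dots> \<le> (cmod w)^2 * M^2 * exp M"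
    using p_le p_sq_le by (intro mult_mono) auto
  finally have "cmod (exp p - 1 - p) / cmod w \<le> (cmod w)^2 * M^2 * exp M / cmod w"
    by (simp add: divide_right_mono)
  also have "\<dots> = cmod w * (M^2 * exp M)"
    using False by (simp add: power2_eq_square)
  finally show ?thesis unfolding p_def by (simp add: norm_divide)
qed simp

lemma norm_exp_ii_minus_1_le:
  assumes w: "cmod w \<le> 1" and c: "\<bar>c\<bar> \<le> M"
  shows "cmod (exp (\<i> * w * of_real c) - 1) \<le> cmod w * (M + M^2 * exp M)"
proof -
  define p where "p = \<i> * w * of_real c"
  have "cmod (exp p - 1 - p) = cmod ((exp p - 1 - p) / w) * cmod w"
    by (cases "w = 0") (simp_all add: norm_divide p_def)
  also have "\<dots> \<le> cmod w * (M^2 * exp M) * cmod w"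
    unfolding p_def by (intro mult_right_mono norm_exp_ii_quotient_le w c) simp
  also have "\<dots> \<le> cmod w * (M^2 * exp M)"
    using w by (simp add: mult_left_le)
  finally have "cmod (exp p - 1) \<le> cmod w * (M^2 * exp M) + cmod p"
    by (metis diff_add_cancel norm_triangle_ineq order_trans add_right_mono)
  moreover have "cmod p \<le> cmod w * M"
    unfolding p_def using c by (simp add: norm_mult mult_left_mono)
  ultimately show ?thesis unfolding p_def by (simp add: algebra_simps)
qed

lemma tendsto_0_if_le_linear:
  fixes \<phi> :: "complex \<Rightarrow> real"
  assumes "\<And>w. w \<noteq> 0 \<Longrightarrow> cmod w \<le> 1 \<Longrightarrow> 0 \<le> \<phi> w \<and> \<phi> w \<le> C * cmod w"
  shows "(\<phi> \<longlongrightarrow> 0) (at 0)"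
proof (rule tendsto_sandwich[of "\<lambda>_. 0" \<phi> _ "\<lambda>w. C * cmod w"])
  have "eventually (\<lambda>w. w \<noteq> 0 \<and> cmod w \<le> 1) (at (0::complex))"
    unfolding eventually_at by (rule exI[of _ 1]) auto
  then show "eventually (\<lambda>w. 0 \<le> \<phi> w) (at 0)" "eventually (\<lambda>w. \<phi> w \<le> C * cmod w) (at 0)"
    by (auto elim!: eventually_mono dest: assms)
  show "((\<lambda>w. C * cmod w) \<longlongrightarrow> 0) (at 0)"
    using tendsto_mult_left[OF tendsto_norm_zero[OF tendsto_ident_at], of C] by simp
qed simp

section \<open>The complexified flow\<close>

definition sigma_ext :: "('x \<Rightarrow> real) \<Rightarrow> ('x \<Rightarrow> 'x \<Rightarrow> complex) \<Rightarrow> complex \<Rightarrow> 'x \<Rightarrow> 'x \<Rightarrow> complex" where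
  "sigma_ext h a z = (\<lambda>x y. exp (\<i> * z * of_real (h x)) * a x y * exp (- \<i> * z * of_real (h y)))"

definition sigma_deriv :: "('x \<Rightarrow> real) \<Rightarrow> ('x \<Rightarrow> 'x \<Rightarrow> complex) \<Rightarrow> complex \<Rightarrow> 'x \<Rightarrow> 'x \<Rightarrow> complex" where
  "sigma_deriv h a z = (\<lambda>x y. \<i> * of_real (h x - h y) * sigma_ext h a z x y)"

definition sigma_remainder ::
    "('x \<Rightarrow> real) \<Rightarrow> ('x \<Rightarrow> 'x \<Rightarrow> complex) \<Rightarrow> complex \<Rightarrow> complex \<Rightarrow> 'x \<Rightarrow> 'x \<Rightarrow> complex" where
  "sigma_remainder h a z w =
    (\<lambda>x y. (sigma_ext h a (z + w) x y - sigma_ext h a z x y) / w - sigma_deriv h a z x y)"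

lemma sigma_ext_of_real: "sigma_ext h a (of_real t) = sigma h t a"
  unfolding sigma_ext_def sigma_def by (simp add: mult.assoc)

lemma sigma_ext_eq: "sigma_ext h a z = (\<lambda>x y. a x y * exp (\<i> * z * of_real (h x - h y)))"
proof (intro ext)
  fix x y
  have "\<i> * z * of_real (h x) + - \<i> * z * of_real (h y) = \<i> * z * of_real (h x - h y)"
    by (simp add: algebra_simps)
  then show "sigma_ext h a z x y = a x y * exp (\<i> * z * of_real (h x - h y))"
    unfolding sigma_ext_def by (metis exp_add mult.commute mult.left_commute)
qed

lemma sigma_ext_add:
  "sigma_ext h a (z + w) x y =
    exp (\<i> * w * of_real (h x)) * sigma_ext h a z x y * exp (\<i> * w * of_real (- h y))"
proof -
  have "\<i> * (z + w) * of_real (h x) = \<i> * z * of_real (h x) + \<i> * w * of_real (h x)"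
    and "- \<i> * (z + w) * of_real (h y) = - \<i> * z * of_real (h y) + \<i> * w * of_real (- h y)"
    by (simp_all add: algebra_simps)
  then show ?thesis unfolding sigma_ext_def by (simp only: exp_add mult_ac)
qed

lemma analytic_forI:
  assumes "\<And>z. sigma_ext h a z \<in> uroe" and "\<And>z. sigma_deriv h a z \<in> uroe"
    and "\<And>z. \<exists>C. \<forall>w. w \<noteq> 0 \<and> cmod w \<le> 1 \<longrightarrow>
           bounded_op (sigma_remainder h a z w) \<and> op_norm (sigma_remainder h a z w) \<le> C * cmod w"
  shows "analytic_for h a"
  unfolding analytic_for_def
proof (intro exI[of _ "sigma_ext h a"] conjI allI)
  fix z
  obtain C where C: "\<And>w. w \<noteq> 0 \<Longrightarrow> cmod w \<le> 1 \<Longrightarrow>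
      bounded_op (sigma_remainder h a z w) \<and> op_norm (sigma_remainder h a z w) \<le> C * cmod w"
    using assms(3) by blast
  have "((\<lambda>w. op_norm (sigma_remainder h a z w)) \<longlongrightarrow> 0) (at 0)"
    by (rule tendsto_0_if_le_linear) (use C op_norm_nonneg in blast)
  then show "\<exists>D\<in>uroe. ((\<lambda>w. op_norm (\<lambda>x y. (sigma_ext h a (z + w) x y - sigma_ext h a z x y) / w - D x y))
      \<longlongrightarrow> 0) (at 0)"
    using assms(2) unfolding sigma_remainder_def by blast
qed (use assms(1) sigma_ext_of_real in auto)

(* Expand the outer factors of sigma_ext h a (z + w) = e^{iwh} (sigma_ext h a z) e^{-iwh}
   to first order in w. *)
lemma sigma_remainder_decomp:
  fixes h :: "'x \<Rightarrow> real" and a :: "'x \<Rightarrow> 'x \<Rightarrow> complex" and z w :: complex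
  assumes "w \<noteq> 0"
  defines "G \<equiv> sigma_ext h a z"
  shows "sigma_remainder h a z w = (\<lambda>x y.
      (exp (\<i> * w * of_real (h x)) - 1 - \<i> * w * of_real (h x)) / w * G x y * exp (\<i> * w * of_real (- h y))
    + G x y * ((exp (\<i> * w * of_real (- h y)) - 1 - \<i> * w * of_real (- h y)) / w)
    + \<i> * of_real (h x) * G x y * (exp (\<i> * w * of_real (- h y)) - 1))"
  using assms(1) unfolding sigma_remainder_def sigma_deriv_def sigma_ext_add G_def
  by (intro ext) (simp add: field_simps)

lemma op_norm_sigma_remainder_le:
  assumes h: "\<And>x. \<bar>h x\<bar> \<le> M" and G: "bounded_op (sigma_ext h a z)"
    and w: "w \<noteq> 0" "cmod w \<le> 1"
  shows "bounded_op (sigma_remainder h a z w) \<and>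
    op_norm (sigma_remainder h a z w)
      \<le> (M^2 * exp M * (exp M + 1) + M * (M + M^2 * exp M)) * op_norm (sigma_ext h a z) * cmod w"
proof -
  have h': "\<bar>- h x\<bar> \<le> M" for x using h[of x] by simp
  have M: "M \<ge> 0" using h[of undefined] by linarith
  define G where "G = sigma_ext h a z"
  define u1 where "u1 x = (exp (\<i> * w * of_real (h x)) - 1 - \<i> * w * of_real (h x)) / w" for x
  define v1 where "v1 y = exp (\<i> * w * of_real (- h y))" for y
  define v2 where "v2 y = (exp (\<i> * w * of_real (- h y)) - 1 - \<i> * w * of_real (- h y)) / w" for y
  define u3 where "u3 x = \<i> * of_real (h x)" for x
  define v3 where "v3 y = exp (\<i> * w * of_real (- h y)) - 1" for y
  have decomp: "sigma_remainder h a z w =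
      (\<lambda>x y. u1 x * G x y * v1 y + ((\<lambda>_. 1) x * G x y * v2 y + u3 x * G x y * v3 y))"
    unfolding sigma_remainder_decomp[OF w(1)] u1_def v1_def v2_def u3_def v3_def G_def
    by (simp add: add.assoc)
  have u1: "cmod (u1 x) \<le> cmod w * (M^2 * exp M)" for x
    unfolding u1_def by (rule norm_exp_ii_quotient_le[OF w(2) h])
  have v1: "cmod (v1 y) \<le> exp M" for y
    unfolding v1_def using w(2) M
    by (intro order_trans[OF norm_exp_ii_le[OF h']]) (simp add: mult_left_le_one_le)
  have one: "cmod ((\<lambda>_. 1 :: complex) x) \<le> 1" for x by simp
  have v2: "cmod (v2 y) \<le> cmod w * (M^2 * exp M)" for y
    unfolding v2_def by (rule norm_exp_ii_quotient_le[OF w(2) h'])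
  have u3: "cmod (u3 x) \<le> M" for x
    unfolding u3_def using h[of x] by (simp add: norm_mult)
  have v3: "cmod (v3 y) \<le> cmod w * (M + M^2 * exp M)" for y
    unfolding v3_def by (rule norm_exp_ii_minus_1_le[OF w(2) h'])
  note T1 = bounded_op_diag_mult[where u=u1 and v=v1, OF G u1 v1, folded G_def]
  note T2 = bounded_op_diag_mult[where u="\<lambda>_. 1" and v=v2, OF G one v2, folded G_def]
  note T3 = bounded_op_diag_mult[where u=u3 and v=v3, OF G u3 v3, folded G_def]
  note T23 = bounded_op_add[OF T2(1) T3(1)]
  note T = bounded_op_add[OF T1(1) T23(1)]
  have "op_norm (sigma_remainder h a z w)
      \<le> cmod w * (M^2 * exp M) * exp M * op_norm G
       + (1 * (cmod w * (M^2 * exp M)) * op_norm G + M * (cmod w * (M + M^2 * exp M)) * op_norm G)"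
    unfolding decomp using T(2) T23(2) T1(2) T2(2) T3(2) by linarith
  also have "\<dots> = (M^2 * exp M * (exp M + 1) + M * (M + M^2 * exp M)) * op_norm G * cmod w"
    by (simp add: algebra_simps)
  finally show ?thesis
    using T(1) unfolding decomp G_def by blast
qed

lemma analytic_for_if_bounded:
  assumes h: "\<And>x. \<bar>h x\<bar> \<le> M" and a: "a \<in> uroe"
  shows "analytic_for h a"
proof (rule analytic_forI)
  have h': "\<bar>- h x\<bar> \<le> M" for x using h[of x] by simp
  fix z
  have u_le: "cmod (exp (\<i> * z * of_real (h x))) \<le> exp (cmod z * M)" for x
    by (rule norm_exp_ii_le[OF h])
  have v_le: "cmod (exp (- \<i> * z * of_real (h y))) \<le> exp (cmod z * M)" for y
    using norm_exp_ii_le[OF h', of z y] by simp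
  show F: "sigma_ext h a z \<in> uroe"
    unfolding sigma_ext_def by (rule uroe_diag_mult[OF a u_le v_le])
  have "cmod (\<i> * of_real (h x)) \<le> M" "cmod (- \<i> * of_real (h x)) \<le> M" for x
    using h[of x] by (simp_all add: norm_mult)
  then have "(\<lambda>x y. \<i> * of_real (h x) * sigma_ext h a z x y * 1
      + 1 * sigma_ext h a z x y * (- \<i> * of_real (h y))) \<in> uroe"
    by (intro uroe_add uroe_diag_mult[OF F]) auto
  then show "sigma_deriv h a z \<in> uroe"
    unfolding sigma_deriv_def by (simp add: algebra_simps)
  show "\<exists>C. \<forall>w. w \<noteq> 0 \<and> cmod w \<le> 1 \<longrightarrow>
      bounded_op (sigma_remainder h a z w) \<and> op_norm (sigma_remainder h a z w) \<le> C * cmod w"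
    using op_norm_sigma_remainder_le[where h=h, OF h] F unfolding uroe_def by blast
qed

lemma roe_alg_schur_mult:
  assumes ulf: "ulf TYPE('x::metric_space)" and a: "a \<in> roe_alg"
  obtains N where "\<And>(m :: 'x \<Rightarrow> 'x \<Rightarrow> complex) K. K \<ge> 0 \<Longrightarrow> (\<And>x y. a x y \<noteq> 0 \<Longrightarrow> cmod (m x y) \<le> K) \<Longrightarrow>
    (\<lambda>x y. a x y * m x y) \<in> roe_alg \<and> op_norm (\<lambda>x y. a x y * m x y) \<le> K * N"
proof -
  obtain r where r: "\<And>x y. a x y \<noteq> 0 \<Longrightarrow> dist x y \<le> r"
    using a unfolding roe_alg_def finite_prop_def by blast
  define R where "R = max r 1"
  obtain N where N: "\<And>x::'x. finite (cball x R) \<and> card (cball x R) \<le> N"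
    using ulf unfolding ulf_def R_def by (meson less_max_iff_disj zero_less_one)
  have ba: "bounded_op a" using a by (simp add: roe_alg_def)
  show thesis
  proof (rule that[of "op_norm a * N"])
    fix m :: "'x \<Rightarrow> 'x \<Rightarrow> complex" and K :: real
    assume K: "K \<ge> 0" and m: "\<And>x y. a x y \<noteq> 0 \<Longrightarrow> cmod (m x y) \<le> K"
    have band: "dist x y \<le> R" if "a x y * m x y \<noteq> 0" for x y
      using r[of x y] that unfolding R_def by auto
    have "cmod (a x y * m x y) \<le> op_norm a * K" for x y
      using norm_entry_le_op_norm[OF ba, of x y] op_norm_nonneg[OF ba] m[of x y] K
      by (cases "a x y = 0") (auto simp: norm_mult intro!: mult_mono)
    then have "bounded_op (\<lambda>x y. a x y * m x y)" "op_norm (\<lambda>x y. a x y * m x y) \<le> op_norm a * K * N"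
      using band_op_norm_le[of "\<lambda>x y. a x y * m x y" R N] band N by blast+
    then show "(\<lambda>x y. a x y * m x y) \<in> roe_alg \<and> op_norm (\<lambda>x y. a x y * m x y) \<le> K * (op_norm a * N)"
      using band unfolding roe_alg_def finite_prop_def by (auto simp: mult_ac)
  qed
qed

lemma sigma_deriv_eq:
  "sigma_deriv h a z = (\<lambda>x y. a x y * (\<i> * of_real (h x - h y) * exp (\<i> * z * of_real (h x - h y))))"
  unfolding sigma_deriv_def sigma_ext_eq by (simp add: mult_ac)

lemma sigma_remainder_eq:
  assumes "w \<noteq> 0"
  shows "sigma_remainder h a z w = (\<lambda>x y. a x y * (exp (\<i> * z * of_real (h x - h y)) *
    ((exp (\<i> * w * of_real (h x - h y)) - 1 - \<i> * w * of_real (h x - h y)) / w)))"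
proof (intro ext)
  fix x y
  have "exp (\<i> * (z + w) * of_real (h x - h y)) = exp (\<i> * z * of_real (h x - h y)) * exp (\<i> * w * of_real (h x - h y))"
    by (simp add: exp_add[symmetric] algebra_simps)
  then show "sigma_remainder h a z w x y = a x y * (exp (\<i> * z * of_real (h x - h y)) *
    ((exp (\<i> * w * of_real (h x - h y)) - 1 - \<i> * w * of_real (h x - h y)) / w))"
    using assms unfolding sigma_remainder_def sigma_deriv_eq sigma_ext_eq by (simp add: field_simps)
qed

lemma analytic_for_if_coarse:
  assumes ulf: "ulf TYPE('x::metric_space)" and h: "coarse_map h" and a: "a \<in> roe_alg"
  shows "analytic_for h (a :: 'x \<Rightarrow> 'x \<Rightarrow> complex)"
proof -
  obtain r where r: "\<And>x y. a x y \<noteq> 0 \<Longrightarrow> dist x y \<le> r"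
    using a unfolding roe_alg_def finite_prop_def by blast
  obtain s where s: "s > 0" "\<And>x y. dist x y < max r 0 + 1 \<Longrightarrow> \<bar>h x - h y\<bar> < s"
    using h unfolding coarse_map_def by (metis add_nonneg_pos max.cobounded2 zero_less_one)
  have hs: "\<bar>h x - h y\<bar> \<le> s" if "a x y \<noteq> 0" for x y
    using s(2)[of x y] r[OF that] by fastforce
  obtain N where N: "\<And>(m :: 'x \<Rightarrow> 'x \<Rightarrow> complex) K. K \<ge> 0 \<Longrightarrow> (\<And>x y. a x y \<noteq> 0 \<Longrightarrow> cmod (m x y) \<le> K) \<Longrightarrow>
      (\<lambda>x y. a x y * m x y) \<in> roe_alg \<and> op_norm (\<lambda>x y. a x y * m x y) \<le> K * N"
    using roe_alg_schur_mult[OF ulf a] by blast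
  show ?thesis
  proof (rule analytic_forI)
    fix z
    have "sigma_ext h a z \<in> roe_alg"
      unfolding sigma_ext_eq by (rule N[THEN conjunct1, OF _ norm_exp_ii_le[OF hs]]) simp
    then show "sigma_ext h a z \<in> uroe" using roe_alg_subset_uroe by blast
    have deriv_mult_le:
      "cmod (\<i> * of_real (h x - h y) * exp (\<i> * z * of_real (h x - h y))) \<le> s * exp (cmod z * s)"
      if "a x y \<noteq> 0" for x y
    proof -
      have "cmod (\<i> * of_real (h x - h y) * exp (\<i> * z * of_real (h x - h y)))
          = \<bar>h x - h y\<bar> * cmod (exp (\<i> * z * of_real (h x - h y)))"
        by (simp only: norm_mult norm_ii norm_of_real mult_1_left)
      also have "\<dots> \<le> s * exp (cmod z * s)"
        using hs[OF that] norm_exp_ii_le[OF hs[OF that], of z] by (intro mult_mono) auto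
      finally show ?thesis .
    qed
    have "sigma_deriv h a z \<in> roe_alg"
      unfolding sigma_deriv_eq
      by (rule N[where K="s * exp (cmod z * s)", THEN conjunct1]) (use deriv_mult_le s(1) in auto)
    then show "sigma_deriv h a z \<in> uroe" using roe_alg_subset_uroe by blast
    have "bounded_op (sigma_remainder h a z w) \<and>
        op_norm (sigma_remainder h a z w) \<le> exp (cmod z * s) * (s^2 * exp s) * N * cmod w"
      if w: "w \<noteq> 0" "cmod w \<le> 1" for w
    proof -
      have "cmod (exp (\<i> * z * of_real (h x - h y)) *
          ((exp (\<i> * w * of_real (h x - h y)) - 1 - \<i> * w * of_real (h x - h y)) / w))
          \<le> exp (cmod z * s) * (cmod w * (s^2 * exp s))" if "a x y \<noteq> 0" for x y
        unfolding norm_mult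
        using norm_exp_ii_le[OF hs[OF that], of z] norm_exp_ii_quotient_le[OF w(2) hs[OF that]]
        by (intro mult_mono) auto
      then have "sigma_remainder h a z w \<in> roe_alg \<and>
          op_norm (sigma_remainder h a z w) \<le> exp (cmod z * s) * (cmod w * (s^2 * exp s)) * N"
        unfolding sigma_remainder_eq[OF w(1)] by (intro N) auto
      then show ?thesis by (auto simp: roe_alg_def mult_ac)
    qed
    then show "\<exists>C. \<forall>w. w \<noteq> 0 \<and> cmod w \<le> 1 \<longrightarrow>
        bounded_op (sigma_remainder h a z w) \<and> op_norm (sigma_remainder h a z w) \<le> C * cmod w"
      by blast
  qed
qed

theorem proposition1p4:
  fixes h :: "'x::metric_space \<Rightarrow> real"
  assumes "ulf TYPE('x)"
  shows "((\<exists>M. \<forall>x. \<bar>h x\<bar> \<le> M) \<longrightarrow> (\<forall>a\<in>uroe. analytic_for h a))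
       \<and> (coarse_map h \<longrightarrow> (\<forall>a\<in>roe_alg. analytic_for h a))"
  using analytic_for_if_bounded analytic_for_if_coarse[OF assms] by blast

end
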